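(* Let $\Gamma$ be a connected infinite graph whose vertices have uniformly bounded degree. Then $\Gamma$ admits a transitive translation-like action by $\mathbb{Z}$ if and only if $\Gamma$ has at most two ends.
   Context: $\Gamma$ is regarded as a metric space on its vertex set via the path-length metric. For a group $H$ and a metric space $(X,d)$, a right action $*$ of $H$ on $X$ is translation-like if it is free ($x*h=x$ implies $h=1_H$) and for every $h\in H$ the set $\{d(x,x*h): x\in X\}$ is bounded. The number of ends of a connected graph is the supremum, over finite sets $A$ of edges, of the number of infinite connected components of $\Gamma - A$. *)

theory Defs
  imports Main "HOL-Library.Extended_Nat"
begin

definition simple_graph :: "'a set \<Rightarrow> ('a \<Rightarrow> 'a \<Rightarrow> bool) \<Rightarrow> bool" where
  "simple_graph V E \<longleftrightarrow> (\<forall>x y. E x y \<longrightarrow> x \<in> V \<and> y \<in> V \<and> E y x \<and> x \<noteq> y)"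

definition graph_connected :: "'a set \<Rightarrow> ('a \<Rightarrow> 'a \<Rightarrow> bool) \<Rightarrow> bool" where
  "graph_connected V E \<longleftrightarrow> (\<forall>x\<in>V. \<forall>y\<in>V. E\<^sup>*\<^sup>* x y)"

definition bounded_degree :: "'a set \<Rightarrow> ('a \<Rightarrow> 'a \<Rightarrow> bool) \<Rightarrow> bool" where
  "bounded_degree V E \<longleftrightarrow> (\<exists>d::nat. \<forall>x\<in>V. finite {y. E x y} \<and> card {y. E x y} \<le> d)"

definition gdist :: "('a \<Rightarrow> 'a \<Rightarrow> bool) \<Rightarrow> 'a \<Rightarrow> 'a \<Rightarrow> nat" where
  "gdist E x y = (LEAST n. (E ^^ n) x y)"

definition int_right_action :: "'a set \<Rightarrow> ('a \<Rightarrow> int \<Rightarrow> 'a) \<Rightarrow> bool" where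
  "int_right_action V act \<longleftrightarrow>
     (\<forall>x\<in>V. \<forall>n. act x n \<in> V) \<and> (\<forall>x\<in>V. act x 0 = x) \<and>
     (\<forall>x\<in>V. \<forall>m n. act (act x m) n = act x (m + n))"

definition translation_like :: "'a set \<Rightarrow> ('a \<Rightarrow> 'a \<Rightarrow> bool) \<Rightarrow> ('a \<Rightarrow> int \<Rightarrow> 'a) \<Rightarrow> bool" where
  "translation_like V E act \<longleftrightarrow>
     int_right_action V act \<and>
     (\<forall>x\<in>V. \<forall>n. act x n = x \<longrightarrow> n = 0) \<and>
     (\<forall>n. \<exists>C::nat. \<forall>x\<in>V. gdist E x (act x n) \<le> C)"

definition transitive_action :: "'a set \<Rightarrow> ('a \<Rightarrow> int \<Rightarrow> 'a) \<Rightarrow> bool" where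
  "transitive_action V act \<longleftrightarrow> (\<forall>x\<in>V. \<forall>y\<in>V. \<exists>n. act x n = y)"

definition remove_edges :: "('a \<Rightarrow> 'a \<Rightarrow> bool) \<Rightarrow> ('a \<times> 'a) set \<Rightarrow> 'a \<Rightarrow> 'a \<Rightarrow> bool" where
  "remove_edges E A x y \<longleftrightarrow> E x y \<and> (x, y) \<notin> A \<and> (y, x) \<notin> A"

definition components :: "'a set \<Rightarrow> ('a \<Rightarrow> 'a \<Rightarrow> bool) \<Rightarrow> 'a set set" where
  "components V E = (\<lambda>x. {y. E\<^sup>*\<^sup>* x y}) ` V"

definition ecard :: "'b set \<Rightarrow> enat" where
  "ecard S = (if finite S then enat (card S) else \<infinity>)"

definition num_ends :: "'a set \<Rightarrow> ('a \<Rightarrow> 'a \<Rightarrow> bool) \<Rightarrow> enat" where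
  "num_ends V E = (SUP A \<in> {A. finite A \<and> (\<forall>(x,y)\<in>A. E x y)}.
      ecard {C \<in> components V (remove_edges E A). infinite C})"

end

theory Submission
  imports Defs "HOL-Library.Countable_Set"
begin

text \<open>A transitive translation-like action of \<int> on \<Gamma> is the same as a bijection f : \<int> \<rightarrow> V
  whose steps f z, f (z + 1) are uniformly close, i.e. a bi-infinite Hamiltonian path in a power
  of \<Gamma>. If such an f exists, deleting finitely many edges only disturbs a bounded stretch of f,
  so every infinite component contains one of the two tails of f: there are at most two ends.
  Conversely, a connected one-ended graph of bounded degree has a Hamiltonian ray in its cube,
  assembled greedily from finite blocks, each being what the current vertex cuts off from infinity.
  A one-ended graph is then enumerated by folding its ray onto \<int>; a two-ended graph splits along
  finitely many edges into two one-ended halves, whose rays are joined across an edge.\<close>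

lemma rtranclp_restrict:
  assumes "R\<^sup>*\<^sup>* a y" "\<And>w. R\<^sup>*\<^sup>* a w \<Longrightarrow> P w"
  shows "(\<lambda>x y. R x y \<and> P x \<and> P y)\<^sup>*\<^sup>* a y"
  using assms
proof (induction rule: rtranclp_induct)
  case (step w z)
  then have "P w" "P z" by (auto intro: rtranclp.rtrancl_into_rtrancl)
  with step show ?case by (auto intro: rtranclp.rtrancl_into_rtrancl)
qed simp

lemma rtranclp_exit:
  assumes "R\<^sup>*\<^sup>* u b" "u \<notin> I" "b \<in> I"
  shows "\<exists>p q. (\<lambda>x y. R x y \<and> x \<notin> I \<and> y \<notin> I)\<^sup>*\<^sup>* u p \<and> R p q \<and> p \<notin> I \<and> q \<in> I"
  using assms
proof (induction rule: converse_rtranclp_induct)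
  case (step u y)
  show ?case
  proof (cases "y \<in> I")
    case False
    then obtain p q where "(\<lambda>x y. R x y \<and> x \<notin> I \<and> y \<notin> I)\<^sup>*\<^sup>* y p" "R p q" "p \<notin> I" "q \<in> I"
      using step by blast
    moreover have "R u y \<and> u \<notin> I \<and> y \<notin> I" using step False by auto
    ultimately show ?thesis by (blast intro: converse_rtranclp_into_rtranclp)
  qed (use step in blast)
qed simp

lemma two_elements_of_ecard: "\<not> ecard S \<le> enat 1 \<Longrightarrow> \<exists>a\<in>S. \<exists>b\<in>S. a \<noteq> b"
proof (rule ccontr)
  assume "\<not> ecard S \<le> enat 1" "\<not> (\<exists>a\<in>S. \<exists>b\<in>S. a \<noteq> b)"
  then have "S = {} \<or> (\<exists>a. S = {a})" by blast
  then have "ecard S \<le> enat 1" unfolding ecard_def by (auto simp: one_enat_def)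
  then show False using \<open>\<not> ecard S \<le> enat 1\<close> by simp
qed

lemma rtranclp_int_chain:
  fixes f :: "int \<Rightarrow> 'a"
  assumes "\<And>z. N \<le> z \<Longrightarrow> R\<^sup>*\<^sup>* (f z) (f (z + 1))" "N \<le> z"
  shows "R\<^sup>*\<^sup>* (f N) (f z)"
  using assms(2)
proof (induction z rule: int_ge_induct)
  case (step z)
  then show ?case using assms(1) rtranclp_trans by metis
qed simp

lemma eventually_constant_bounded_mono:
  fixes f :: "nat \<Rightarrow> nat"
  assumes "mono f" "\<And>k. f k \<le> b"
  obtains K where "\<And>k. K \<le> k \<Longrightarrow> f k = f K"
proof -
  have fin: "finite (range f)" using assms(2) by (auto intro: finite_subset[of _ "{..b}"])
  obtain K where K: "f K = Max (range f)" using Max_in[OF fin] by auto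
  have "f k = f K" if "K \<le> k" for k
    using monoD[OF assms(1) that] K fin by (metis Max_ge UNIV_I image_eqI le_antisym)
  then show ?thesis using that by blast
qed

lemma finite_int_set_bounded:
  fixes S :: "int set"
  assumes "finite S"
  obtains N where "0 < N" "\<And>z. z \<in> S \<Longrightarrow> \<bar>z\<bar> < N"
proof -
  have "\<bar>z\<bar> \<le> Max (insert 0 (abs ` S))" if "z \<in> S" for z using assms that by (intro Max_ge) auto
  moreover have "0 \<le> Max (insert 0 (abs ` S))" using assms by (intro Max_ge) auto
  ultimately show ?thesis using that[of "Max (insert 0 (abs ` S)) + 1"] by fastforce
qed

lemma bij_betw_int_glue:
  assumes g1: "bij_betw g1 UNIV W1" and g2: "bij_betw g2 UNIV W2" and "W1 \<inter> W2 = {}"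
  shows "bij_betw (\<lambda>z::int. if 0 \<le> z then g1 (nat z) else g2 (nat (- z - 1))) UNIV (W1 \<union> W2)"
proof -
  define F where "F = (\<lambda>z::int. if 0 \<le> z then g1 (nat z) else g2 (nat (- z - 1)))"
  have "bij_betw nat {z::int. 0 \<le> z} UNIV" by (rule bij_betw_byWitness[where f' = int]) auto
  then have "bij_betw (\<lambda>z. g1 (nat z)) {z. 0 \<le> z} W1" using bij_betw_trans[OF _ g1] by (simp add: comp_def)
  then have "bij_betw F {z. 0 \<le> z} W1" by (rule bij_betw_cong[THEN iffD1, rotated]) (simp add: F_def)
  moreover have "bij_betw (\<lambda>z. nat (- z - 1)) {z::int. z < 0} UNIV"
    by (rule bij_betw_byWitness[where f' = "\<lambda>n. - int n - 1"]) auto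
  then have "bij_betw (\<lambda>z. g2 (nat (- z - 1))) {z. z < 0} W2" using bij_betw_trans[OF _ g2] by (simp add: comp_def)
  then have "bij_betw F {z. z < 0} W2" by (rule bij_betw_cong[THEN iffD1, rotated]) (simp add: F_def)
  ultimately have "bij_betw F ({z. 0 \<le> z} \<union> {z. z < 0}) (W1 \<union> W2)"
    using assms(3) by (rule bij_betw_combine)
  moreover have "{z::int. 0 \<le> z} \<union> {z. z < 0} = UNIV" by auto
  ultimately show ?thesis unfolding F_def by simp
qed

locale bounded_degree_graph =
  fixes V :: "'a set" and E :: "'a \<Rightarrow> 'a \<Rightarrow> bool"
  assumes simple: "simple_graph V E" and degree: "bounded_degree V E"
begin

lemma edge_in_V: "E x y \<Longrightarrow> x \<in> V \<and> y \<in> V"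
  using simple unfolding simple_graph_def by blast

lemma edge_sym: "E x y \<Longrightarrow> E y x"
  using simple unfolding simple_graph_def by blast

lemma finite_neighbours: "finite {y. E x y}"
proof (cases "x \<in> V")
  case False
  then have "{y. E x y} = {}" using edge_in_V by blast
  then show ?thesis by simp
qed (use degree in \<open>auto simp: bounded_degree_def\<close>)

lemma finite_neighbours_of_set: "finite T \<Longrightarrow> finite {y. \<exists>t\<in>T. E t y}"
proof -
  have "{y. \<exists>t\<in>T. E t y} = (\<Union>t\<in>T. {y. E t y})" by blast
  then show "finite T \<Longrightarrow> ?thesis" using finite_neighbours by simp
qed

section \<open>Connectivity inside vertex sets\<close>

definition induced :: "'a set \<Rightarrow> 'a \<Rightarrow> 'a \<Rightarrow> bool" where
  "induced U x y \<longleftrightarrow> E x y \<and> x \<in> U \<and> y \<in> U"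

definition path_in :: "'a set \<Rightarrow> 'a \<Rightarrow> 'a \<Rightarrow> bool" where
  "path_in U = (induced U)\<^sup>*\<^sup>*"

definition component_in :: "'a set \<Rightarrow> 'a \<Rightarrow> 'a set" where
  "component_in U x = {w. path_in U x w}"

definition connected_set :: "'a set \<Rightarrow> bool" where
  "connected_set U \<longleftrightarrow> (\<forall>a\<in>U. \<forall>b\<in>U. path_in U a b)"

lemma path_in_refl: "path_in U x x"
  unfolding path_in_def by simp

lemma path_in_sym: "path_in U x y \<Longrightarrow> path_in U y x"
proof -
  have "symp (induced U)" by (auto intro!: sympI simp: induced_def dest: edge_sym)
  then show "path_in U x y \<Longrightarrow> ?thesis" unfolding path_in_def by (blast dest: sympD[OF symp_rtranclp])
qed

lemma path_in_trans: "path_in U x y \<Longrightarrow> path_in U y z \<Longrightarrow> path_in U x z"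
  unfolding path_in_def by simp

lemma path_in_edge: "E x y \<Longrightarrow> x \<in> U \<Longrightarrow> y \<in> U \<Longrightarrow> path_in U x y"
  unfolding path_in_def induced_def by auto

lemma path_in_mono: "path_in U x y \<Longrightarrow> U \<subseteq> U' \<Longrightarrow> path_in U' x y"
  unfolding path_in_def induced_def by (erule rtranclp_mono[THEN predicate2D, rotated]) auto

lemma path_in_memD: "path_in U x y \<Longrightarrow> x \<in> U \<Longrightarrow> y \<in> U"
  unfolding path_in_def by (induction rule: rtranclp_induct) (auto simp: induced_def)

lemma path_in_restrict:
  assumes "path_in U a y" "\<And>w. path_in U a w \<Longrightarrow> w \<in> U'"
  shows "path_in (U \<inter> U') a y"
proof -
  have "(\<lambda>x y. induced U x y \<and> x \<in> U' \<and> y \<in> U') = induced (U \<inter> U')"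
    unfolding induced_def by auto
  then show ?thesis
    using rtranclp_restrict[of "induced U" a y "\<lambda>w. w \<in> U'"] assms unfolding path_in_def by auto
qed

lemma path_in_exit:
  assumes "path_in U u b" "u \<notin> I" "b \<in> I"
  shows "\<exists>p q. path_in (U - I) u p \<and> induced U p q \<and> p \<notin> I \<and> q \<in> I"
proof -
  have "(\<lambda>x y. induced U x y \<and> x \<notin> I \<and> y \<notin> I) = induced (U - I)" unfolding induced_def by auto
  then show ?thesis using rtranclp_exit[of "induced U" u b I] assms unfolding path_in_def by auto
qed

lemma connected_set_V: "graph_connected V E \<Longrightarrow> connected_set V"
proof -
  have "E \<le> induced V" by (auto simp: induced_def dest: edge_in_V)
  then show "graph_connected V E \<Longrightarrow> ?thesis"
    unfolding connected_set_def graph_connected_def path_in_def by (metis rtranclp_mono predicate2D)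
qed

lemma connected_set_singleton: "connected_set {t}"
  unfolding connected_set_def by (simp add: path_in_refl)

lemma component_in_subset: "x \<in> U \<Longrightarrow> component_in U x \<subseteq> U"
  using path_in_memD unfolding component_in_def by blast

lemma component_in_closed: "w \<in> component_in U x \<Longrightarrow> path_in U w v \<Longrightarrow> v \<in> component_in U x"
  unfolding component_in_def using path_in_trans by blast

lemma component_in_mono: "U \<subseteq> U' \<Longrightarrow> component_in U x \<subseteq> component_in U' x"
  unfolding component_in_def using path_in_mono by blast

lemma connected_component_in:
  assumes "x \<in> U"
  shows "connected_set (component_in U x)"
proof -
  have "path_in (component_in U x) x w" if "w \<in> component_in U x" for w
    using path_in_restrict[of U x w "component_in U x"] that component_in_subset[OF assms]
    by (auto simp: component_in_def Int_absorb1)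
  then show ?thesis unfolding connected_set_def using path_in_sym path_in_trans by blast
qed

lemma path_to_boundary:
  assumes "connected_set U" "t0 \<in> U" "t0 \<in> T" "w \<in> U - T"
  shows "\<exists>y. y \<in> U - T \<and> (\<exists>t\<in>T. E t y) \<and> path_in (U - T) y w"
proof -
  have "path_in U w t0" using assms unfolding connected_set_def by blast
  from path_in_exit[OF this, of T] assms obtain p q where
    "path_in (U - T) w p" "induced U p q" "p \<notin> T" "q \<in> T" by blast
  then show ?thesis using edge_sym path_in_sym unfolding induced_def by blast
qed

lemma infinite_component_after_removal:
  assumes "connected_set U" "infinite U" "finite T"
  shows "\<exists>z\<in>U - T. infinite (component_in (U - T) z)"
proof (cases "U \<inter> T = {}")
  case True
  then have "U - T = U" by blast
  obtain z where "z \<in> U" using assms(2) by (metis finite.emptyI ex_in_conv)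
  then have "U \<subseteq> component_in (U - T) z"
    using assms(1) \<open>U - T = U\<close> unfolding connected_set_def component_in_def by auto
  then show ?thesis using \<open>U - T = U\<close> \<open>z \<in> U\<close> assms(2) finite_subset by metis
next
  case False
  then obtain t0 where t0: "t0 \<in> U" "t0 \<in> T" by auto
  define Y where "Y = {y. y \<in> U - T \<and> (\<exists>t\<in>T. E t y)}"
  have "finite Y" using finite_neighbours_of_set[OF assms(3)] unfolding Y_def by (auto intro: finite_subset)
  have cover: "U - T \<subseteq> (\<Union>y\<in>Y. component_in (U - T) y)"
    using path_to_boundary[OF assms(1) t0] unfolding Y_def component_in_def by blast
  have "\<exists>y\<in>Y. infinite (component_in (U - T) y)"
  proof (rule ccontr)
    assume "\<not> ?thesis"
    then have "finite (U - T)" using finite_subset[OF cover] \<open>finite Y\<close> by blast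
    then show False using assms(2,3) by simp
  qed
  then show ?thesis unfolding Y_def by blast
qed

lemma infinite_component_survives_removal:
  assumes "connected_set X" "infinite X" "finite T" "X \<subseteq> U"
  obtains x where "x \<in> X - T" "infinite (component_in (U - T) x)"
proof -
  obtain x where "x \<in> X - T" "infinite (component_in (X - T) x)"
    using infinite_component_after_removal[OF assms(1-3)] by blast
  moreover have "component_in (X - T) x \<subseteq> component_in (U - T) x"
    using assms(4) by (intro component_in_mono) auto
  ultimately show ?thesis using that finite_subset by blast
qed

definition near :: "nat \<Rightarrow> 'a \<Rightarrow> 'a \<Rightarrow> bool" where
  "near k x y \<longleftrightarrow> (\<exists>n\<le>k. (E ^^ n) x y)"

lemma relpowp_edge_sym: "(E ^^ n) x y \<Longrightarrow> (E ^^ n) y x"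
proof (induction n arbitrary: x y)
  case (Suc n)
  then obtain z where "(E ^^ n) x z" "E z y" by (auto elim: relpowp_Suc_E)
  then show ?case using Suc relpowp_Suc_I2[of E y z n x] edge_sym by blast
qed simp

lemma near_sym: "near k x y \<Longrightarrow> near k y x"
  unfolding near_def using relpowp_edge_sym by blast

lemma near_trans: "near a x y \<Longrightarrow> near b y z \<Longrightarrow> near (a + b) x z"
  unfolding near_def by (metis add_mono relpowp_trans)

lemma near_mono: "near a x y \<Longrightarrow> a \<le> b \<Longrightarrow> near b x y"
  unfolding near_def by (meson order_trans)

lemma near_refl: "near k x x"
  unfolding near_def by (auto intro!: exI[of _ 0])

lemma near_edge: "E x y \<Longrightarrow> near 1 x y"
  unfolding near_def by (auto intro!: exI[of _ 1])

lemma finite_relpowp_image: "finite {y. (E ^^ n) x y}"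
proof (induction n)
  case (Suc n)
  have "{y. (E ^^ Suc n) x y} = (\<Union>z\<in>{y. (E ^^ n) x y}. {y. E z y})"
    by (auto intro: relpowp_Suc_I elim: relpowp_Suc_E)
  then show ?case using Suc finite_neighbours by simp
qed simp

lemma finite_near: "finite {y. near k x y}"
proof -
  have "{y. near k x y} = (\<Union>n\<in>{..k}. {y. (E ^^ n) x y})" unfolding near_def by auto
  then show ?thesis using finite_relpowp_image by simp
qed

lemma gdist_le: "near k x y \<Longrightarrow> gdist E x y \<le> k"
  unfolding near_def gdist_def by (meson Least_le order_trans)

lemma near_gdist: "E\<^sup>*\<^sup>* x y \<Longrightarrow> near (gdist E x y) x y"
  unfolding near_def gdist_def by (auto simp: rtranclp_power intro: LeastI)

section \<open>Ends\<close>

definition edges_at :: "'a set \<Rightarrow> ('a \<times> 'a) set" where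
  "edges_at T = {(x, y). E x y \<and> (x \<in> T \<or> y \<in> T)}"

lemma finite_edges_at: "finite T \<Longrightarrow> finite (edges_at T)"
proof -
  have "edges_at T \<subseteq> (\<Union>t\<in>T. {t} \<times> {y. E t y}) \<union> (\<Union>t\<in>T. {y. E t y} \<times> {t})"
    unfolding edges_at_def using edge_sym by blast
  then show "finite T \<Longrightarrow> ?thesis" by (rule finite_subset) (simp add: finite_neighbours)
qed

lemma remove_edges_at_imp_path_in:
  assumes "(remove_edges E (edges_at T))\<^sup>*\<^sup>* x y" "x \<notin> T"
  shows "y \<notin> T \<and> path_in (V - T) x y"
  using assms
proof (induction rule: rtranclp_induct)
  case (step w y)
  then have "E w y" "w \<notin> T" "y \<notin> T" unfolding remove_edges_def edges_at_def by auto
  then show ?case using step edge_in_V path_in_edge path_in_trans by (metis Diff_iff)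
qed (simp add: path_in_refl)

lemma path_in_imp_remove_edges_at:
  "path_in (V - T) x y \<Longrightarrow> (remove_edges E (edges_at T))\<^sup>*\<^sup>* x y"
  unfolding path_in_def
  by (erule rtranclp_mono[THEN predicate2D, rotated])
     (auto simp: induced_def remove_edges_def edges_at_def)

definition cut_component :: "('a \<times> 'a) set \<Rightarrow> 'a \<Rightarrow> 'a set" where
  "cut_component A u = {w. (remove_edges E A)\<^sup>*\<^sup>* u w}"

lemma components_remove_edges: "components V (remove_edges E A) = cut_component A ` V"
  unfolding components_def cut_component_def ..

lemma remove_edges_rtranclp_sym:
  "(remove_edges E A)\<^sup>*\<^sup>* u w \<Longrightarrow> (remove_edges E A)\<^sup>*\<^sup>* w u"
proof -
  have "symp (remove_edges E A)" by (auto intro!: sympI simp: remove_edges_def dest: edge_sym)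
  then show "(remove_edges E A)\<^sup>*\<^sup>* u w \<Longrightarrow> ?thesis" by (blast dest: sympD[OF symp_rtranclp])
qed

lemma cut_component_eq: "w \<in> cut_component A u \<Longrightarrow> cut_component A w = cut_component A u"
  unfolding cut_component_def
  by (auto intro: rtranclp_trans dest: remove_edges_rtranclp_sym)

lemma cut_component_subset: "u \<in> V \<Longrightarrow> cut_component A u \<subseteq> V"
proof
  fix w assume "u \<in> V" "w \<in> cut_component A u"
  then have "(remove_edges E A)\<^sup>*\<^sup>* u w" unfolding cut_component_def by simp
  then show "w \<in> V" using \<open>u \<in> V\<close>
    by (induction rule: rtranclp_induct) (auto simp: remove_edges_def dest: edge_in_V)
qed

lemma path_in_of_cut_component:
  assumes "(remove_edges E A)\<^sup>*\<^sup>* u w" "cut_component A u \<subseteq> U"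
  shows "path_in U u w"
proof -
  have "(\<lambda>x y. remove_edges E A x y \<and> x \<in> U \<and> y \<in> U)\<^sup>*\<^sup>* u w"
    using rtranclp_restrict[of "remove_edges E A" u w "\<lambda>w. w \<in> U"] assms
    unfolding cut_component_def by blast
  then show ?thesis unfolding path_in_def
    by (rule rtranclp_mono[THEN predicate2D, rotated]) (auto simp: induced_def remove_edges_def)
qed

lemma connected_cut_component: "connected_set (cut_component A u)"
proof -
  have "path_in (cut_component A u) u w" if "w \<in> cut_component A u" for w
    using that path_in_of_cut_component unfolding cut_component_def by blast
  then show ?thesis unfolding connected_set_def using path_in_sym path_in_trans by blast
qed

lemma card_infinite_cut_components_le:
  assumes "num_ends V E \<le> enat k" "finite A" "\<forall>(x, y)\<in>A. E x y"
  shows "finite {C \<in> cut_component A ` V. infinite C} \<and> card {C \<in> cut_component A ` V. infinite C} \<le> k"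
proof -
  have "ecard {C \<in> cut_component A ` V. infinite C} \<le> num_ends V E"
    unfolding num_ends_def components_remove_edges[symmetric] using assms(2,3) by (auto intro!: SUP_upper)
  then have "ecard {C \<in> cut_component A ` V. infinite C} \<le> enat k" using assms(1) by simp
  then show ?thesis unfolding ecard_def by (auto split: if_splits)
qed

(* Removing the edges at T leaves each infinite component of V - T inside
   a different infinite component of the remaining graph. *)
lemma card_separated_points_le:
  assumes "num_ends V E \<le> enat k" "finite T" "P \<subseteq> V - T"
    "\<And>x. x \<in> P \<Longrightarrow> infinite (component_in (V - T) x)"
    "\<And>x y. x \<in> P \<Longrightarrow> y \<in> P \<Longrightarrow> path_in (V - T) x y \<Longrightarrow> x = y"
  shows "finite P \<and> card P \<le> k"
proof -
  define S where "S = {C \<in> cut_component (edges_at T) ` V. infinite C}"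
  have S: "finite S" "card S \<le> k"
    using card_infinite_cut_components_le[OF assms(1) finite_edges_at[OF assms(2)]]
    unfolding S_def edges_at_def by auto
  have "cut_component (edges_at T) ` P \<subseteq> S"
  proof
    fix C assume "C \<in> cut_component (edges_at T) ` P"
    then obtain x where x: "x \<in> P" "C = cut_component (edges_at T) x" by auto
    have "component_in (V - T) x \<subseteq> C"
      using x path_in_imp_remove_edges_at unfolding component_in_def cut_component_def by auto
    then show "C \<in> S" using assms(3,4) x finite_subset unfolding S_def by blast
  qed
  moreover have "inj_on (cut_component (edges_at T)) P"
  proof (rule inj_onI)
    fix x y assume "x \<in> P" "y \<in> P" "cut_component (edges_at T) x = cut_component (edges_at T) y"
    then have "(remove_edges E (edges_at T))\<^sup>*\<^sup>* x y" unfolding cut_component_def by auto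
    then have "path_in (V - T) x y" using remove_edges_at_imp_path_in \<open>x \<in> P\<close> assms(3) by blast
    then show "x = y" using assms(5) \<open>x \<in> P\<close> \<open>y \<in> P\<close> by blast
  qed
  ultimately show ?thesis using S
    by (metis card_image card_mono finite_imageD finite_subset le_trans)
qed

definition one_ended :: "'a set \<Rightarrow> bool" where
  "one_ended W \<longleftrightarrow> (\<forall>S x y. finite S \<longrightarrow> x \<in> W - S \<longrightarrow> y \<in> W - S \<longrightarrow>
     infinite (component_in (W - S) x) \<longrightarrow> infinite (component_in (W - S) y) \<longrightarrow> path_in (W - S) x y)"

lemma one_ended_V:
  assumes "num_ends V E \<le> enat 1"
  shows "one_ended V"
  unfolding one_ended_def
proof (intro allI impI)
  fix S x y assume xy: "finite S" "x \<in> V - S" "y \<in> V - S"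
    "infinite (component_in (V - S) x)" "infinite (component_in (V - S) y)"
  show "path_in (V - S) x y"
  proof (rule ccontr)
    assume xy_sep: "\<not> path_in (V - S) x y"
    then have "x \<noteq> y" using path_in_refl by metis
    have "finite {x, y} \<and> card {x, y} \<le> 1"
    proof (rule card_separated_points_le[OF assms xy(1)])
      show "\<And>u v. u \<in> {x, y} \<Longrightarrow> v \<in> {x, y} \<Longrightarrow> path_in (V - S) u v \<Longrightarrow> u = v"
        using xy_sep path_in_sym by blast
    qed (use xy in auto)
    then show False using \<open>x \<noteq> y\<close> by auto
  qed
qed

lemma path_in_stays_on_side:
  assumes "path_in (V - T) p q" "p \<in> W1" "W1 \<union> W2 = V"
    and "\<And>x y. x \<in> W1 \<Longrightarrow> y \<in> W2 \<Longrightarrow> E x y \<Longrightarrow> x \<in> T \<or> y \<in> T"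
  shows "q \<in> W1 \<and> path_in (W1 - T) p q"
  using assms(1) unfolding path_in_def[of "V - T"]
proof (induction rule: rtranclp_induct)
  case (step w q)
  then have "w \<in> W1" "E w q" "w \<notin> T" "q \<notin> T" "q \<in> V" unfolding induced_def by auto
  then have "q \<in> W1" using assms(3,4) by blast
  then have "path_in (W1 - T) w q" using \<open>E w q\<close> \<open>w \<in> W1\<close> \<open>w \<notin> T\<close> \<open>q \<notin> T\<close>
    by (intro path_in_edge) auto
  then show ?case using step.IH \<open>q \<in> W1\<close> path_in_trans by blast
qed (simp add: assms(2) path_in_refl)

lemma no_three_separated_points:
  assumes "num_ends V E \<le> enat 2" "finite T" "x \<in> V - T" "y \<in> V - T" "z \<in> V - T"
    and "infinite (component_in (V - T) x)" "infinite (component_in (V - T) y)"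
      "infinite (component_in (V - T) z)"
    and "\<not> path_in (V - T) x y" "\<not> path_in (V - T) x z" "\<not> path_in (V - T) y z"
  shows False
proof -
  have "finite {x, y, z} \<and> card {x, y, z} \<le> 2"
  proof (rule card_separated_points_le[OF assms(1,2)])
    show "\<And>u v. u \<in> {x, y, z} \<Longrightarrow> v \<in> {x, y, z} \<Longrightarrow> path_in (V - T) u v \<Longrightarrow> u = v"
      using assms(9-11) path_in_sym by blast
  qed (use assms(3-8) in auto)
  moreover have "x \<noteq> y" "x \<noteq> z" "y \<noteq> z" using assms(9-11) path_in_refl by blast+
  ultimately show False by auto
qed

lemma one_ended_side:
  assumes ends: "num_ends V E \<le> enat 2"
    and part: "W1 \<union> W2 = V" "W1 \<inter> W2 = {}"
    and W2: "connected_set W2" "infinite W2"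
    and "finite F"
    and cross: "\<And>x y. x \<in> W1 \<Longrightarrow> y \<in> W2 \<Longrightarrow> E x y \<Longrightarrow> x \<in> F \<or> y \<in> F"
  shows "one_ended W1"
  unfolding one_ended_def
proof (intro allI impI)
  fix S x y assume a: "finite S" "x \<in> W1 - S" "y \<in> W1 - S"
    "infinite (component_in (W1 - S) x)" "infinite (component_in (W1 - S) y)"
  show "path_in (W1 - S) x y"
  proof (rule ccontr)
    assume not_xy: "\<not> path_in (W1 - S) x y"
    define T where "T = S \<union> F"
    have "finite T" using a(1) \<open>finite F\<close> unfolding T_def by auto
    have stay: "q \<in> W1 \<and> path_in (W1 - S) p q" if "path_in (V - T) p q" "p \<in> W1" for p q
      using path_in_stays_on_side[OF that part(1)] cross path_in_mono unfolding T_def by blast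
    define X where "X = component_in (W1 - S) x"
    define Y where "Y = component_in (W1 - S) y"
    have XY: "X \<subseteq> W1 - S" "Y \<subseteq> W1 - S" unfolding X_def Y_def using component_in_subset a by auto
    then have "X \<subseteq> V" "Y \<subseteq> V" "W2 \<subseteq> V" using part by auto
    moreover have "connected_set X" "connected_set Y"
      using connected_component_in a unfolding X_def Y_def by auto
    ultimately obtain x' y' z' where
      x': "x' \<in> X - T" "infinite (component_in (V - T) x')" and
      y': "y' \<in> Y - T" "infinite (component_in (V - T) y')" and
      z': "z' \<in> W2 - T" "infinite (component_in (V - T) z')"
      using infinite_component_survives_removal[OF _ _ \<open>finite T\<close>] W2 a(4,5)
      unfolding X_def Y_def by metis
    have x'y'W1: "x' \<in> W1" "y' \<in> W1" using x' y' XY by auto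
    have not_x'y': "\<not> path_in (V - T) x' y'"
    proof
      assume "path_in (V - T) x' y'"
      then have "path_in (W1 - S) x' y'" using stay x'y'W1 by blast
      moreover have "path_in (W1 - S) x x'" "path_in (W1 - S) y y'"
        using x' y' unfolding X_def Y_def component_in_def by auto
      ultimately show False using not_xy path_in_trans path_in_sym by blast
    qed
    have not_uz': "\<not> path_in (V - T) u z'" if "u \<in> {x', y'}" for u
      using stay[of u z'] x'y'W1 that z' part by auto
    show False
      using no_three_separated_points[OF ends \<open>finite T\<close>, of x' y' z'] x' y' z' XY part
        not_x'y' not_uz' path_in_sym by blast
  qed
qed

section \<open>Splitting a two-ended graph into one-ended halves\<close>

lemma component_in_edge_closed:
  "x \<in> component_in U a \<Longrightarrow> E x y \<Longrightarrow> x \<in> U \<Longrightarrow> y \<in> U \<Longrightarrow> y \<in> component_in U a"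
  using component_in_closed path_in_edge by blast

lemma connected_complement_of_component:
  assumes U: "connected_set U" and I: "connected_set I" "I \<subseteq> U" "b \<in> I" and "a \<in> U - I"
  shows "connected_set (U - component_in (U - I) a)"
proof -
  define W where "W = U - component_in (U - I) a"
  have "I \<subseteq> W" using component_in_subset[OF \<open>a \<in> U - I\<close>] I(2) unfolding W_def by auto
  have "path_in W b u" if "u \<in> W" for u
  proof (cases "u \<in> I")
    case True
    then show ?thesis using I \<open>I \<subseteq> W\<close> path_in_mono unfolding connected_set_def by blast
  next
    case False
    have "path_in U u b" using U I(2,3) that unfolding W_def connected_set_def by blast
    from path_in_exit[OF this False I(3)] obtain p q where
      pq: "path_in (U - I) u p" "induced U p q" "p \<notin> I" "q \<in> I" by blast
    have stays_in_W: "w \<in> W" if "path_in (U - I) u w" for w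
      using \<open>u \<in> W\<close> that path_in_memD[OF that] False component_in_closed path_in_sym
      unfolding W_def by auto
    have "path_in W u p" using path_in_restrict[OF pq(1) stays_in_W] path_in_mono by blast
    moreover have "path_in W p q" using pq stays_in_W[OF pq(1)] \<open>I \<subseteq> W\<close>
      unfolding induced_def by (auto intro: path_in_edge)
    moreover have "path_in W b q" using I \<open>I \<subseteq> W\<close> pq(4) path_in_mono unfolding connected_set_def by blast
    ultimately show ?thesis using path_in_trans path_in_sym by blast
  qed
  then show ?thesis unfolding W_def connected_set_def using path_in_sym path_in_trans by blast
qed

lemma two_infinite_cut_components:
  assumes "\<not> num_ends V E \<le> enat 1"
  obtains A a b where "finite A" "\<forall>(x, y)\<in>A. E x y" "a \<in> V" "b \<in> V"
    "infinite (cut_component A a)" "infinite (cut_component A b)"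
    "cut_component A a \<inter> cut_component A b = {}"
proof -
  obtain A where A: "finite A" "\<forall>(x, y)\<in>A. E x y"
    "\<not> ecard {C \<in> cut_component A ` V. infinite C} \<le> enat 1"
    using assms unfolding num_ends_def components_remove_edges by (auto simp: SUP_le_iff)
  from two_elements_of_ecard[OF A(3)] obtain a b where ab: "a \<in> V" "b \<in> V" "infinite (cut_component A a)" "infinite (cut_component A b)"
    "cut_component A a \<noteq> cut_component A b" by auto
  moreover have "cut_component A a \<inter> cut_component A b = {}"
    using ab(5) cut_component_eq by blast
  ultimately show ?thesis using that A(1,2) by blast
qed

lemma edge_leaving_side_removed:
  assumes "a \<in> V - cut_component A b" "x \<in> component_in (V - cut_component A b) a" "y \<in> V - component_in (V - cut_component A b) a"
    and "E x y"
  shows "x \<in> fst ` A \<union> snd ` A \<or> y \<in> fst ` A \<union> snd ` A"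
proof (rule ccontr)
  assume "\<not> ?thesis"
  then have "remove_edges E A y x" using \<open>E x y\<close> edge_sym unfolding remove_edges_def by force
  moreover have x: "x \<in> V - cut_component A b" using component_in_subset[OF assms(1)] assms(2) by blast
  then have "y \<in> cut_component A b" using assms(2-4) component_in_edge_closed edge_in_V by blast
  ultimately have "x \<in> cut_component A b" unfolding cut_component_def
    by (auto intro: rtranclp.rtrancl_into_rtrancl)
  then show False using x by blast
qed

lemma edge_between_parts:
  assumes "connected_set V" "W1 \<union> W2 = V" "a \<in> W1" "b \<in> W2" "W1 \<inter> W2 = {}"
  obtains s1 s2 where "s1 \<in> W1" "s2 \<in> W2" "E s1 s2"
proof -
  have "path_in V a b" using assms(1-4) unfolding connected_set_def by blast
  moreover have "a \<notin> W2" using assms(3,5) by blast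
  ultimately obtain p q where "induced V p q" "p \<notin> W2" "q \<in> W2"
    using path_in_exit[of V a b W2] assms(4) by blast
  then show ?thesis using that assms(2) unfolding induced_def by blast
qed

lemma one_ended_both_sides:
  assumes ends: "num_ends V E \<le> enat 2" and part: "W1 \<union> W2 = V" "W1 \<inter> W2 = {}"
    and W1: "connected_set W1" "infinite W1" and W2: "connected_set W2" "infinite W2"
    and "finite F" and cross: "\<And>x y. x \<in> W1 \<Longrightarrow> y \<in> W2 \<Longrightarrow> E x y \<Longrightarrow> x \<in> F \<or> y \<in> F"
  shows "one_ended W1" "one_ended W2"
proof -
  show "one_ended W1" using one_ended_side[OF ends part W2 \<open>finite F\<close> cross] .
  show "one_ended W2"
  proof (rule one_ended_side[OF ends _ _ W1 \<open>finite F\<close>])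
    show "W2 \<union> W1 = V" "W2 \<inter> W1 = {}" using part by auto
    show "x \<in> F \<or> y \<in> F" if "x \<in> W2" "y \<in> W1" "E x y" for x y
      using cross[OF that(2,1) edge_sym[OF that(3)]] by blast
  qed
qed

text \<open>The two sides are the component of a in V - I2 and its complement, where I1 \<ni> a and
  I2 \<ni> b are distinct infinite components of the graph minus the finite edge set A. Only edges
  of A cross between the sides, so two ends of one side and an end of the other would make three.\<close>

lemma split_two_ended:
  assumes "graph_connected V E" and ends: "num_ends V E \<le> enat 2" "\<not> num_ends V E \<le> enat 1"
  obtains W1 W2 s1 s2 where "W1 \<union> W2 = V" "W1 \<inter> W2 = {}"
    "connected_set W1" "infinite W1" "one_ended W1"
    "connected_set W2" "infinite W2" "one_ended W2" "s1 \<in> W1" "s2 \<in> W2" "E s1 s2"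
proof -
  have V: "connected_set V" using assms(1) by (rule connected_set_V)
  obtain A a b where A: "finite A" "\<forall>(x, y)\<in>A. E x y" and ab: "a \<in> V" "b \<in> V"
    and I: "infinite (cut_component A a)" "infinite (cut_component A b)"
      "cut_component A a \<inter> cut_component A b = {}"
    using two_infinite_cut_components[OF ends(2)] by blast
  define I1 where "I1 = cut_component A a"
  define I2 where "I2 = cut_component A b"
  have in_own: "a \<in> I1" "b \<in> I2" unfolding I1_def I2_def cut_component_def by simp_all
  have "a \<in> V - I2" using ab in_own I(3) unfolding I1_def I2_def by blast
  define W1 where "W1 = component_in (V - I2) a"
  define W2 where "W2 = V - W1"
  have W1_sub: "W1 \<subseteq> V - I2" unfolding W1_def by (rule component_in_subset[OF \<open>a \<in> V - I2\<close>])
  have part: "W1 \<union> W2 = V" "W1 \<inter> W2 = {}" using W1_sub unfolding W2_def by auto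
  have "I1 \<subseteq> V - I2" using cut_component_subset[OF ab(1)] I(3) unfolding I1_def I2_def by blast
  then have "I1 \<subseteq> W1"
    using path_in_of_cut_component[of A a _ "V - I2"]
    unfolding I1_def W1_def component_in_def cut_component_def by blast
  have "I2 \<subseteq> W2" using W1_sub cut_component_subset[OF ab(2)] unfolding I2_def W2_def by auto
  have conn: "connected_set W1" "connected_set W2"
    unfolding W1_def W2_def using connected_component_in[OF \<open>a \<in> V - I2\<close>]
      connected_complement_of_component[OF V connected_cut_component, of A b]
      cut_component_subset[OF ab(2)] in_own \<open>a \<in> V - I2\<close> unfolding I2_def by simp_all
  have inf: "infinite W1" "infinite W2"
    using \<open>I1 \<subseteq> W1\<close> \<open>I2 \<subseteq> W2\<close> I(1,2) finite_subset unfolding I1_def I2_def by auto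
  have "one_ended W1" "one_ended W2"
    using one_ended_both_sides[OF ends(1) part conn(1) inf(1) conn(2) inf(2), of "fst ` A \<union> snd ` A"]
      edge_leaving_side_removed[of a A b] \<open>a \<in> V - I2\<close> \<open>finite A\<close>
    unfolding W2_def W1_def I2_def by auto
  moreover obtain s1 s2 where "s1 \<in> W1" "s2 \<in> W2" "E s1 s2"
    using edge_between_parts[OF V part(1)] in_own \<open>I1 \<subseteq> W1\<close> \<open>I2 \<subseteq> W2\<close> part(2) by blast
  ultimately show ?thesis using that part conn inf by blast
qed

section \<open>Hamiltonian rays in the cube of a one-ended graph\<close>

lemma neighbour_in_connected_set:
  assumes "connected_set P" "t \<in> P" "w \<in> P" "w \<noteq> t"
  shows "\<exists>c\<in>P - {t}. E t c"
proof -
  have "path_in P t w" using assms unfolding connected_set_def by blast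
  then obtain p c where "induced P p c" "p \<notin> P - {t}" "c \<in> P - {t}"
    using path_in_exit[of P t w "P - {t}"] assms(3,4) by blast
  then show ?thesis unfolding induced_def by auto
qed

lemma finite_tour:
  assumes "finite P" "t \<in> P" "connected_set P"
  shows "\<exists>L. distinct L \<and> set L = P \<and> hd L = t \<and> near 1 (last L) t \<and> successively (near 3) L"
  using assms
proof (induction "card P" arbitrary: P t rule: less_induct)
  case less
  show ?case
  proof (cases "P = {t}")
    case True
    then show ?thesis by (intro exI[of _ "[t]"]) (simp add: near_refl)
  next
    case False
    then obtain w where "w \<in> P" "w \<noteq> t" using less.prems by auto
    then obtain c where c: "E t c" "c \<in> P - {t}" using neighbour_in_connected_set less.prems(2,3) by blast
    define C where "C = component_in (P - {t}) c"
    define P' where "P' = P - C"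
    have C_sub: "C \<subseteq> P - {t}" unfolding C_def by (rule component_in_subset[OF c(2)])
    have "c \<in> C" unfolding C_def component_in_def by (simp add: path_in_refl)
    have "t \<in> P'" using C_sub less.prems unfolding P'_def by auto
    have "connected_set C" unfolding C_def by (rule connected_component_in[OF c(2)])
    have "connected_set P'" unfolding P'_def C_def
      by (rule connected_complement_of_component) (use less.prems c in \<open>auto simp: connected_set_def path_in_refl\<close>)
    have "card C < card P" using C_sub less.prems by (intro psubset_card_mono) auto
    moreover have "card P' < card P" using \<open>c \<in> C\<close> c less.prems unfolding P'_def
      by (intro psubset_card_mono) auto
    moreover have "finite C" "finite P'" using C_sub less.prems(1) finite_subset unfolding P'_def by auto
    ultimately obtain L1 L2 where
      L1: "distinct L1" "set L1 = P'" "hd L1 = t" "near 1 (last L1) t" "successively (near 3) L1" and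
      L2: "distinct L2" "set L2 = C" "hd L2 = c" "near 1 (last L2) c" "successively (near 3) L2"
      using less.hyps[OF _ _ \<open>t \<in> P'\<close> \<open>connected_set P'\<close>] less.hyps[OF _ _ \<open>c \<in> C\<close> \<open>connected_set C\<close>]
      by blast
    (* The tour runs through P - C and then backwards through the branch C: the junction
       passes t and c, and the tour ends at c, next to t. *)
    have ne: "L1 \<noteq> []" "L2 \<noteq> []" using L1(2) L2(2) \<open>t \<in> P'\<close> \<open>c \<in> C\<close> by auto
    have "near (1 + 1 + 1) (last L1) (last L2)"
      using near_trans[OF near_trans[OF L1(4) near_edge[OF c(1)]] near_sym[OF L2(4)]] .
    then have "near 3 (last L1) (hd (rev L2))" using ne by (simp add: hd_rev numeral_3_eq_3)
    moreover have "successively (near 3) (rev L2)"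
      using L2(5) by (simp add: successively_mono near_sym)
    ultimately have "successively (near 3) (L1 @ rev L2)"
      using L1(5) ne by (simp add: successively_append_iff)
    moreover have "near 1 (last (L1 @ rev L2)) t"
      using L2(3) ne near_sym[OF near_edge[OF c(1)]] by (simp add: last_rev)
    moreover have "distinct (L1 @ rev L2)" "set (L1 @ rev L2) = P" "hd (L1 @ rev L2) = t"
      using L1 L2 ne C_sub unfolding P'_def by auto
    ultimately show ?thesis by blast
  qed
qed

lemma finite_outside_infinite_component:
  assumes "connected_set U" "t \<in> U" and z: "z \<in> U - {t}"
    and unique: "\<And>y. y \<in> U - {t} \<Longrightarrow> infinite (component_in (U - {t}) y) \<Longrightarrow> path_in (U - {t}) z y"
  shows "finite (U - component_in (U - {t}) z)"
proof -
  define J where "J = component_in (U - {t}) z"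
  define Y where "Y = {y. E t y \<and> finite (component_in (U - {t}) y)}"
  have "U - J \<subseteq> insert t (\<Union>y\<in>Y. component_in (U - {t}) y)"
  proof
    fix w assume w: "w \<in> U - J"
    show "w \<in> insert t (\<Union>y\<in>Y. component_in (U - {t}) y)"
    proof (cases "w = t")
      case False
      then obtain y where y: "y \<in> U - {t}" "E t y" "path_in (U - {t}) y w"
        using path_to_boundary[OF assms(1,2), of "{t}" w] w by auto
      have "finite (component_in (U - {t}) y)"
      proof (rule ccontr)
        assume "infinite (component_in (U - {t}) y)"
        then have "w \<in> J" using unique[OF y(1)] y(3) path_in_trans unfolding J_def component_in_def by blast
        then show False using w by blast
      qed
      then show ?thesis using y unfolding Y_def component_in_def by blast
    qed simp
  qed
  moreover have "finite Y" unfolding Y_def using finite_neighbours by (auto intro: finite_subset)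
  then have "finite (insert t (\<Union>y\<in>Y. component_in (U - {t}) y))" unfolding Y_def by auto
  ultimately show ?thesis unfolding J_def by (rule finite_subset)
qed

lemma walk_into_component:
  assumes J: "J = component_in (U - {t}) z" "z \<in> U - {t}" and "v \<in> J"
  shows "((induced U) ^^ n) x v \<Longrightarrow> (x \<in> J \<and> (\<exists>m\<le>n. ((induced J) ^^ m) x v)) \<or>
         (\<exists>t' m. m < n \<and> E t t' \<and> t' \<in> J \<and> ((induced J) ^^ m) t' v)"
proof (induction n arbitrary: x)
  case 0
  then show ?case using \<open>v \<in> J\<close> by (auto intro!: exI[of _ 0])
next
  case (Suc n)
  obtain u where u: "induced U x u" "((induced U) ^^ n) u v" using relpowp_Suc_D2[OF Suc.prems] by blast
  have J_sub: "J \<subseteq> U - {t}" unfolding J(1) by (rule component_in_subset[OF J(2)])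
  from Suc.IH[OF u(2)] show ?case
  proof
    assume "u \<in> J \<and> (\<exists>m\<le>n. ((induced J) ^^ m) u v)"
    then obtain m where m: "u \<in> J" "m \<le> n" "((induced J) ^^ m) u v" by blast
    show ?thesis
    proof (cases "x \<in> J")
      case True
      then have "induced J x u" using u(1) m(1) unfolding induced_def by blast
      then have "((induced J) ^^ Suc m) x v" using m(3) by (rule relpowp_Suc_I2)
      then show ?thesis using True m by (intro disjI1 conjI exI[of _ "Suc m"]) auto
    next
      case False
      have "x = t"
      proof (rule ccontr)
        assume "x \<noteq> t"
        moreover have "E u x" "u \<in> U - {t}" "x \<in> U" using u(1) m(1) J_sub edge_sym
          unfolding induced_def by auto
        ultimately have "x \<in> J" using component_in_edge_closed[of u "U - {t}" z x, folded J(1)] m(1) by blast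
        then show False using False by blast
      qed
      then show ?thesis using u m unfolding induced_def by (intro disjI2 exI[of _ u] exI[of _ m]) auto
    qed
  qed (use less_SucI in blast)
qed

definition dist_in :: "'a set \<Rightarrow> 'a \<Rightarrow> 'a \<Rightarrow> nat" where
  "dist_in U x y = (LEAST n. ((induced U) ^^ n) x y)"

lemma dist_in_le: "((induced U) ^^ n) x y \<Longrightarrow> dist_in U x y \<le> n"
  unfolding dist_in_def by (rule Least_le)

lemma relpowp_dist_in: "path_in U x y \<Longrightarrow> ((induced U) ^^ dist_in U x y) x y"
  unfolding path_in_def dist_in_def by (auto simp: rtranclp_power intro: LeastI)

end

locale one_ended_subgraph = bounded_degree_graph +
  fixes W :: "'a set"
  assumes W_connected: "connected_set W" and W_infinite: "infinite W" and W_one_ended: "one_ended W"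
begin

lemma countable_W: "countable W"
proof -
  obtain s where s: "s \<in> W" using W_infinite by (metis ex_in_conv finite.emptyI)
  have "W \<subseteq> (\<Union>n. {y. (E ^^ n) s y})"
  proof
    fix w assume "w \<in> W"
    then have "path_in W s w" using W_connected s unfolding connected_set_def by auto
    then have "E\<^sup>*\<^sup>* s w" unfolding path_in_def
      by (rule rtranclp_mono[THEN predicate2D, rotated]) (auto simp: induced_def)
    then show "w \<in> (\<Union>n. {y. (E ^^ n) s y})" by (auto simp: rtranclp_power)
  qed
  moreover have "countable (\<Union>n. {y. (E ^^ n) s y})"
    using finite_relpowp_image by (auto intro: countable_finite)
  ultimately show ?thesis by (rule countable_subset)
qed

definition enum_W :: "nat \<Rightarrow> 'a" where
  "enum_W = from_nat_into W"

lemma range_enum_W: "range enum_W = W"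
  unfolding enum_W_def using countable_W W_infinite by (intro range_from_nat_into) auto

definition first_missing :: "'a set \<Rightarrow> 'a" where
  "first_missing D = enum_W (LEAST i. enum_W i \<notin> D)"

lemma first_missing_in:
  assumes "t \<in> W - D"
  shows "first_missing D \<in> W - D"
proof -
  obtain i where "enum_W i = t" using range_enum_W assms by (metis DiffD1 rangeE)
  then have "enum_W (LEAST i. enum_W i \<notin> D) \<notin> D" using assms by (metis DiffD2 LeastI)
  then show ?thesis unfolding first_missing_def using range_enum_W by blast
qed

text \<open>The ray through W is built in finite blocks. The block starting at t is everything of the
  remaining part W - D that is cut off from infinity by t; as W is one-ended this is finite.
  The distance to the first vertex of W not yet covered decreases with every block that misses it,
  so every vertex is eventually covered.\<close>

definition stage_ok :: "'a set \<Rightarrow> 'a \<Rightarrow> bool" where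
  "stage_ok D t \<longleftrightarrow> finite D \<and> D \<subseteq> W \<and> t \<in> W - D \<and> connected_set (W - D)"

definition good_block :: "'a set \<Rightarrow> 'a \<Rightarrow> 'a set \<Rightarrow> 'a \<Rightarrow> bool" where
  "good_block D t P t' \<longleftrightarrow> finite P \<and> t \<in> P \<and> P \<subseteq> W - D \<and> connected_set P \<and>
     t' \<in> W - D - P \<and> E t t' \<and> connected_set (W - (D \<union> P)) \<and>
     (first_missing D \<notin> P \<longrightarrow>
        dist_in (W - (D \<union> P)) t' (first_missing D) < dist_in (W - D) t (first_missing D))"

lemma good_block_exists:
  assumes "stage_ok D t"
  shows "\<exists>P t'. good_block D t P t'"
proof -
  define W' where "W' = W - D"
  have D: "finite D" "t \<in> W'" "connected_set W'" using assms unfolding stage_ok_def W'_def by auto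
  have "infinite W'" using W_infinite D(1) unfolding W'_def by auto
  obtain z where z: "z \<in> W' - {t}" "infinite (component_in (W' - {t}) z)"
    using infinite_component_after_removal[OF D(3) \<open>infinite W'\<close>, of "{t}"] by auto
  define J where "J = component_in (W' - {t}) z"
  have J_sub: "J \<subseteq> W' - {t}" unfolding J_def by (rule component_in_subset[OF z(1)])
  have unique: "path_in (W' - {t}) z y" if "y \<in> W' - {t}" "infinite (component_in (W' - {t}) y)" for y
  proof -
    have "W' - {t} = W - insert t D" unfolding W'_def by auto
    then show ?thesis using W_one_ended[unfolded one_ended_def, rule_format, of "insert t D" z y] D(1) z that
      by simp
  qed
  define P where "P = W' - J"
  have "finite P" unfolding P_def J_def
    by (rule finite_outside_infinite_component[OF D(3,2) z(1) unique])
  have "connected_set P" unfolding P_def J_def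
    by (rule connected_complement_of_component[OF D(3) connected_set_singleton]) (use D(2) z(1) in auto)
  have "W - (D \<union> P) = J" using J_sub unfolding P_def W'_def by auto
  define v where "v = (if first_missing D \<in> J then first_missing D else z)"
  have "v \<in> J" unfolding v_def J_def component_in_def by (auto simp: path_in_refl)
  then have "path_in W' t v" using D(2,3) J_sub unfolding connected_set_def by blast
  then have "((induced W') ^^ dist_in W' t v) t v" by (rule relpowp_dist_in)
  moreover have "t \<notin> J" using J_sub by blast
  ultimately obtain t' m where
    t': "m < dist_in W' t v" "E t t'" "t' \<in> J" "((induced J) ^^ m) t' v"
    using walk_into_component[OF J_def z(1) \<open>v \<in> J\<close>] by blast
  have "first_missing D \<notin> P \<longrightarrow>
      dist_in (W - (D \<union> P)) t' (first_missing D) < dist_in (W - D) t (first_missing D)"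
  proof
    assume "first_missing D \<notin> P"
    moreover have "first_missing D \<in> W'" using first_missing_in D(2) unfolding W'_def by auto
    ultimately have "v = first_missing D" unfolding v_def P_def by auto
    then show "dist_in (W - (D \<union> P)) t' (first_missing D) < dist_in (W - D) t (first_missing D)"
      using dist_in_le[OF t'(4)] t'(1) \<open>W - (D \<union> P) = J\<close> unfolding W'_def by auto
  qed
  moreover have "t \<in> P" "t' \<in> W - D - P" "P \<subseteq> W - D" using D(2) J_sub t'(3) unfolding P_def W'_def by auto
  moreover have "connected_set (W - (D \<union> P))"
    unfolding \<open>W - (D \<union> P) = J\<close> J_def by (rule connected_component_in[OF z(1)])
  ultimately have "good_block D t P t'"
    unfolding good_block_def using \<open>finite P\<close> \<open>connected_set P\<close> t'(2) by simp
  then show ?thesis by blast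
qed

definition next_block :: "'a set \<times> 'a \<Rightarrow> 'a set \<times> 'a" where
  "next_block st = (SOME pt. good_block (fst st) (snd st) (fst pt) (snd pt))"

lemma good_next_block:
  "stage_ok D t \<Longrightarrow> good_block D t (fst (next_block (D, t))) (snd (next_block (D, t)))"
  unfolding next_block_def using good_block_exists by (auto intro: someI_ex)

primrec stage :: "'a \<Rightarrow> nat \<Rightarrow> 'a set \<times> 'a" where
  "stage s 0 = ({}, s)"
| "stage s (Suc k) = (fst (stage s k) \<union> fst (next_block (stage s k)), snd (next_block (stage s k)))"

context
  fixes s assumes s: "s \<in> W"
begin

abbreviation "covered k \<equiv> fst (stage s k)"
abbreviation "start k \<equiv> snd (stage s k)"
abbreviation "block k \<equiv> fst (next_block (stage s k))"

lemma stage_invariant: "stage_ok (covered k) (start k) \<and> good_block (covered k) (start k) (block k) (start (Suc k))"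
proof (induction k)
  case 0
  have "stage_ok (covered 0) (start 0)" using s W_connected unfolding stage_ok_def by auto
  then show ?case using good_next_block[of "{}" s] by simp
next
  case (Suc k)
  then have "stage_ok (covered (Suc k)) (start (Suc k))" unfolding stage_ok_def good_block_def by auto
  then show ?case using good_next_block[of "covered (Suc k)" "start (Suc k)"] by simp
qed

lemma covered_mono: "k \<le> k' \<Longrightarrow> covered k \<subseteq> covered k'"
  by (induction k' rule: dec_induct) auto

lemma covered_exhaustive:
  assumes "w \<in> W"
  shows "\<exists>k. w \<in> covered k"
proof (rule ccontr)
  assume never: "\<nexists>k. w \<in> covered k"
  obtain j where j: "enum_W j = w" using range_enum_W assms by (metis rangeE)
  define idx where "idx k = (LEAST i. enum_W i \<notin> covered k)" for k
  have missing: "enum_W (idx k) \<notin> covered k" for k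
    unfolding idx_def by (rule LeastI[of _ j]) (use never j in auto)
  have "idx k \<le> j" for k unfolding idx_def by (rule Least_le) (use never j in auto)
  moreover have "mono idx"
    unfolding idx_def by (rule monoI, rule Least_le) (use missing covered_mono in \<open>auto simp: idx_def\<close>)
  ultimately obtain K where K: "\<And>k. K \<le> k \<Longrightarrow> idx k = idx K"
    using eventually_constant_bounded_mono by blast
  define v where "v = enum_W (idx K)"
  have target: "first_missing (covered k) = v" "v \<notin> covered k" if "K \<le> k" for k
    using K[OF that] missing[of k] unfolding first_missing_def v_def idx_def by auto
  define \<delta> where "\<delta> k = dist_in (W - covered k) (start k) v" for k
  have decreasing: "\<delta> (Suc k) < \<delta> k" if "K \<le> k" for k
    using stage_invariant[of k] target[OF that] target(2)[of "Suc k"] that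
    unfolding good_block_def \<delta>_def by auto
  have "\<delta> (K + i) + i \<le> \<delta> K" for i
  proof (induction i)
    case (Suc i)
    then show ?case using decreasing[of "K + i"] by simp
  qed simp
  from this[of "Suc (\<delta> K)"] show False by simp
qed

definition block_tour :: "nat \<Rightarrow> 'a list" where
  "block_tour k = (SOME L. distinct L \<and> set L = block k \<and> hd L = start k \<and>
     near 1 (last L) (start k) \<and> successively (near 3) L)"

lemma block_tour: "distinct (block_tour k) \<and> set (block_tour k) = block k \<and> hd (block_tour k) = start k \<and>
    near 1 (last (block_tour k)) (start k) \<and> successively (near 3) (block_tour k)"
  unfolding block_tour_def
  by (rule someI_ex, rule finite_tour) (use stage_invariant[of k] in \<open>auto simp: good_block_def\<close>)

lemma block_tour_nonempty: "block_tour k \<noteq> []"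
  using block_tour[of k] stage_invariant[of k] unfolding good_block_def by auto

definition tour_prefix :: "nat \<Rightarrow> 'a list" where
  "tour_prefix k = concat (map block_tour [0..<k])"

lemma tour_prefix_Suc: "tour_prefix (Suc k) = tour_prefix k @ block_tour k"
  unfolding tour_prefix_def by simp

lemma set_tour_prefix: "set (tour_prefix k) = covered k"
  by (induction k) (auto simp: tour_prefix_Suc block_tour tour_prefix_def)

lemma tour_prefix_prefix: "k \<le> k' \<Longrightarrow> \<exists>ys. tour_prefix k' = tour_prefix k @ ys"
  by (induction k' rule: dec_induct) (auto simp: tour_prefix_Suc)

lemma tour_prefix_props:
  "distinct (tour_prefix k) \<and> successively (near 3) (tour_prefix k) \<and>
   (tour_prefix k = [] \<or> near 2 (last (tour_prefix k)) (start k)) \<and> k \<le> length (tour_prefix k)"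
proof (induction k)
  case 0 then show ?case by (simp add: tour_prefix_def)
next
  case (Suc k)
  have good: "good_block (covered k) (start k) (block k) (start (Suc k))" using stage_invariant by blast
  have "set (tour_prefix k) \<inter> set (block_tour k) = {}"
    using good block_tour[of k] set_tour_prefix[of k] unfolding good_block_def by auto
  then have "distinct (tour_prefix (Suc k))" using Suc block_tour[of k] by (simp add: tour_prefix_Suc)
  moreover have "near 2 (last (tour_prefix (Suc k))) (start (Suc k))"
  proof -
    have "near (1 + 1) (last (block_tour k)) (start (Suc k))"
      using block_tour[of k] good near_trans near_edge unfolding good_block_def by blast
    then show ?thesis using block_tour_nonempty by (simp add: tour_prefix_Suc numeral_2_eq_2)
  qed
  moreover have "successively (near 3) (tour_prefix (Suc k))"
  proof -
    have "tour_prefix k = [] \<or> near 3 (last (tour_prefix k)) (hd (block_tour k))"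
      using Suc block_tour[of k] near_mono[of 2 _ _ 3] by auto
    then show ?thesis using Suc block_tour[of k] unfolding tour_prefix_Suc successively_append_iff by blast
  qed
  moreover have "Suc k \<le> length (tour_prefix (Suc k))"
  proof -
    have "k \<le> length (tour_prefix k)" "0 < length (block_tour k)" using Suc block_tour_nonempty[of k] by auto
    then show ?thesis unfolding tour_prefix_Suc length_append by linarith
  qed
  ultimately show ?case by simp
qed

definition ray :: "nat \<Rightarrow> 'a" where
  "ray n = tour_prefix (Suc n) ! n"

lemma ray_nth: "n < length (tour_prefix k) \<Longrightarrow> ray n = tour_prefix k ! n"
proof -
  assume n: "n < length (tour_prefix k)"
  have "n < length (tour_prefix (Suc n))" using tour_prefix_props[of "Suc n"] by simp
  then show ?thesis
    using n tour_prefix_prefix[of k "Suc n"] tour_prefix_prefix[of "Suc n" k] unfolding ray_def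
    by (cases "k \<le> Suc n") (auto simp: nth_append)
qed

lemma bij_ray: "bij_betw ray UNIV W"
proof -
  have "inj ray"
  proof (rule injI)
    fix a b assume "ray a = ray b"
    define k where "k = Suc (Suc (max a b))"
    have "a < length (tour_prefix k)" "b < length (tour_prefix k)"
      using tour_prefix_props[of k] unfolding k_def by auto
    then show "a = b" using \<open>ray a = ray b\<close> ray_nth tour_prefix_props[of k]
      by (simp add: nth_eq_iff_index_eq)
  qed
  moreover have "range ray \<subseteq> W"
  proof
    fix w assume "w \<in> range ray"
    then obtain n where "w = ray n" by auto
    moreover have "n < length (tour_prefix (Suc n))" using tour_prefix_props[of "Suc n"] by simp
    ultimately have "w \<in> covered (Suc n)" unfolding ray_def using set_tour_prefix nth_mem by blast
    then show "w \<in> W" using stage_invariant[of "Suc n"] unfolding stage_ok_def by auto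
  qed
  moreover have "W \<subseteq> range ray"
  proof
    fix w assume "w \<in> W"
    then obtain k where "w \<in> set (tour_prefix k)" using covered_exhaustive set_tour_prefix by blast
    then show "w \<in> range ray" using ray_nth by (metis in_set_conv_nth rangeI)
  qed
  ultimately show ?thesis unfolding bij_betw_def by blast
qed

lemma ray_0: "ray 0 = s"
  using block_tour[of 0] block_tour_nonempty[of 0]
  by (simp add: ray_def tour_prefix_def hd_conv_nth)

lemma near_ray_Suc: "near 3 (ray n) (ray (Suc n))"
proof -
  have l: "Suc n < length (tour_prefix (Suc (Suc n)))" using tour_prefix_props[of "Suc (Suc n)"] by simp
  then show ?thesis
    using successively_nth[of "near 3" "tour_prefix (Suc (Suc n))" n] tour_prefix_props
      ray_nth[of n "Suc (Suc n)"] ray_nth[of "Suc n" "Suc (Suc n)"] by simp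
qed

end

lemma ray_enumeration:
  assumes "s \<in> W"
  shows "\<exists>g. bij_betw g UNIV W \<and> g 0 = s \<and> (\<forall>n. near 3 (g n) (g (Suc n)))"
  using bij_ray ray_0 near_ray_Suc assms by blast

end

context bounded_degree_graph begin

section \<open>Bi-infinite enumerations and translation-like actions\<close>

lemma glue_enumerations:
  assumes g1: "bij_betw g1 UNIV W1" and g2: "bij_betw g2 UNIV W2"
    and part: "W1 \<union> W2 = V" "W1 \<inter> W2 = {}"
    and step1: "\<And>n. near K (g1 n) (g1 (Suc n))" and step2: "\<And>n. near K (g2 n) (g2 (Suc n))"
    and junction: "near K (g2 0) (g1 0)"
  shows "\<exists>f::int \<Rightarrow> 'a. bij_betw f UNIV V \<and> (\<forall>z. near K (f z) (f (z + 1)))"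
proof -
  define f where "f z = (if 0 \<le> z then g1 (nat z) else g2 (nat (- z - 1)))" for z :: int
  have "near K (f z) (f (z + 1))" for z
  proof -
    consider "0 \<le> z" | "z = -1" | "z < -1" by linarith
    then show ?thesis
    proof cases
      case 1
      then show ?thesis using step1[of "nat z"] unfolding f_def by (simp add: nat_add_distrib)
    next
      case 2
      then show ?thesis using junction unfolding f_def by simp
    next
      case 3
      then have "nat (- z - 1) = Suc (nat (- (z + 1) - 1))" by simp
      then show ?thesis using 3 near_sym[OF step2[of "nat (- (z + 1) - 1)"]] unfolding f_def by simp
    qed
  qed
  moreover have "bij_betw f UNIV V"
    using bij_betw_int_glue[OF g1 g2 part(2)] part(1) unfolding f_def by simp
  ultimately show ?thesis by blast
qed

lemma int_enumeration_of_nat_enumeration: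
  assumes g: "bij_betw g UNIV V" and step: "\<And>n. near K (g n) (g (Suc n))"
  shows "\<exists>f::int \<Rightarrow> 'a. bij_betw f UNIV V \<and> (\<forall>z. near (2 * K) (f z) (f (z + 1)))"
proof -
  have "inj g" and range_g: "range g = V" using g unfolding bij_betw_def by auto
  have even_odd: "bij_betw (\<lambda>n. g (2 * n + i)) UNIV (g ` {n. n mod 2 = i})" if "i < 2" for i
    unfolding bij_betw_def
  proof
    show "inj (\<lambda>n. g (2 * n + i))" by (rule injI) (simp add: inj_eq[OF \<open>inj g\<close>])
    show "range (\<lambda>n. g (2 * n + i)) = g ` {n. n mod 2 = i}"
      using that by (auto simp: image_iff) (metis div_mult_mod_eq mult.commute)
  qed
  have two_steps: "near (2 * K) (g n) (g (Suc (Suc n)))" for n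
    using near_trans[OF step[of n] step[of "Suc n"]] by (simp add: mult_2)
  show ?thesis
  proof (rule glue_enumerations[OF even_odd[of 0] even_odd[of 1]])
    have "{n. n mod 2 = 0} \<union> {n. n mod 2 = 1} = (UNIV :: nat set)" by auto
    then show "g ` {n. n mod 2 = 0} \<union> g ` {n. n mod 2 = 1} = V" using range_g by (metis image_Un)
    show "g ` {n. n mod 2 = 0} \<inter> g ` {n. n mod 2 = 1} = {}" using \<open>inj g\<close> by (auto simp: inj_eq)
    show "near (2 * K) (g (2 * n + 0)) (g (2 * Suc n + 0))" for n using two_steps[of "2 * n"] by simp
    show "near (2 * K) (g (2 * n + 1)) (g (2 * Suc n + 1))" for n using two_steps[of "2 * n + 1"] by simp
    show "near (2 * K) (g (2 * 0 + 1)) (g (2 * 0 + 0))" using near_mono[OF near_sym[OF step[of 0]]] by simp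
  qed simp_all
qed

lemma near_enumeration_shift:
  fixes f :: "int \<Rightarrow> 'a"
  assumes step: "\<And>z. near K (f z) (f (z + 1))"
  shows "near (K * nat \<bar>n\<bar>) (f i) (f (i + n))"
proof -
  have forward: "near (K * m) (f i) (f (i + int m))" for i m
  proof (induction m)
    case (Suc m)
    then show ?case using near_trans[OF Suc step[of "i + int m"]] by (simp add: ac_simps)
  qed (simp add: near_refl)
  show ?thesis
  proof (cases "0 \<le> n")
    case False
    then show ?thesis using near_sym[OF forward[where i = "i + n" and m = "nat \<bar>n\<bar>"]] by simp
  qed (use forward[where m = "nat n"] in simp)
qed

lemma translation_like_of_enumeration:
  assumes bij: "bij_betw f UNIV V" and step: "\<And>z::int. near K (f z) (f (z + 1))"
  shows "\<exists>act. translation_like V E act \<and> transitive_action V act"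
proof -
  have "inj f" and range_f: "range f = V" using bij unfolding bij_betw_def by auto
  define pos where "pos = inv_into UNIV f"
  have f_pos: "f (pos x) = x" if "x \<in> V" for x unfolding pos_def using range_f that by (metis f_inv_into_f)
  have pos_f: "pos (f i) = i" for i unfolding pos_def using \<open>inj f\<close> by simp
  define act where "act x n = f (pos x + n)" for x n
  have "int_right_action V act"
    unfolding int_right_action_def act_def using range_f pos_f f_pos by (auto simp: add.assoc)
  moreover have "\<forall>x\<in>V. \<forall>n. act x n = x \<longrightarrow> n = 0"
  proof (intro ballI allI impI)
    fix x n assume "x \<in> V" "act x n = x"
    then have "f (pos x + n) = f (pos x)" unfolding act_def using f_pos by simp
    then show "n = 0" by (simp add: inj_eq[OF \<open>inj f\<close>])
  qed
  moreover have "\<forall>x\<in>V. gdist E x (act x n) \<le> K * nat \<bar>n\<bar>" for n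
  proof
    fix x assume "x \<in> V"
    have "near (K * nat \<bar>n\<bar>) (f (pos x)) (f (pos x + n))"
      by (rule near_enumeration_shift[where f = f, OF step])
    then have "near (K * nat \<bar>n\<bar>) x (act x n)" using f_pos[OF \<open>x \<in> V\<close>] unfolding act_def by simp
    then show "gdist E x (act x n) \<le> K * nat \<bar>n\<bar>" by (rule gdist_le)
  qed
  moreover have "transitive_action V act"
    unfolding transitive_action_def act_def using f_pos by (metis add.commute diff_add_cancel)
  ultimately show ?thesis unfolding translation_like_def by blast
qed

lemma enumeration_of_translation_like:
  assumes "graph_connected V E" "V \<noteq> {}"
    and act: "translation_like V E act" "transitive_action V act"
  shows "\<exists>f::int \<Rightarrow> 'a. \<exists>K. bij_betw f UNIV V \<and> (\<forall>z. near K (f z) (f (z + 1)))"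
proof -
  have closed: "\<And>x n. x \<in> V \<Longrightarrow> act x n \<in> V" and act_0: "\<And>x. x \<in> V \<Longrightarrow> act x 0 = x"
    and act_add: "\<And>x m n. x \<in> V \<Longrightarrow> act (act x m) n = act x (m + n)"
    and free: "\<And>x n. x \<in> V \<Longrightarrow> act x n = x \<Longrightarrow> n = 0"
    using act(1) unfolding translation_like_def int_right_action_def by auto
  obtain K where K: "\<forall>x\<in>V. gdist E x (act x 1) \<le> K" using act(1) unfolding translation_like_def by blast
  obtain x0 where x0: "x0 \<in> V" using assms(2) by blast
  define f where "f n = act x0 n" for n
  have "inj f"
  proof (rule injI)
    fix a b assume "f a = f b"
    then have "act (f a) (- a) = act (f b) (- a)" by simp
    then have "act x0 (b - a) = x0" unfolding f_def using act_add[OF x0] act_0[OF x0] by simp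
    then show "a = b" using free[OF x0, of "b - a"] by simp
  qed
  moreover have "range f = V"
  proof
    show "range f \<subseteq> V" using closed[OF x0] unfolding f_def by blast
    show "V \<subseteq> range f" using act(2) x0 unfolding transitive_action_def f_def by (metis rangeI subsetI)
  qed
  moreover have "near K (f z) (f (z + 1))" for z
  proof -
    have "f z \<in> V" "f (z + 1) = act (f z) 1" unfolding f_def using closed act_add x0 by auto
    moreover have "E\<^sup>*\<^sup>* (f z) (act (f z) 1)"
      using assms(1) closed \<open>f z \<in> V\<close> unfolding graph_connected_def by blast
    moreover have "gdist E (f z) (act (f z) 1) \<le> K" using K \<open>f z \<in> V\<close> by blast
    ultimately show ?thesis using near_mono[OF near_gdist] by metis
  qed
  ultimately show ?thesis unfolding bij_betw_def by blast
qed

lemma remove_edges_near: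
  assumes "near K x y" and far: "\<forall>a\<in>fst ` A \<union> snd ` A. \<not> near K a x"
  shows "(remove_edges E A)\<^sup>*\<^sup>* x y"
proof -
  obtain k where "k \<le> K" "(E ^^ k) x y" using assms(1) unfolding near_def by blast
  then show ?thesis
  proof (induction k arbitrary: y)
    case (Suc k)
    then obtain z where z: "(E ^^ k) x z" "E z y" by (auto elim: relpowp_Suc_E)
    have "near K z x" using relpowp_edge_sym[OF z(1)] Suc.prems(1) unfolding near_def
      by (intro exI[of _ k]) simp
    moreover have "near K y x" using relpowp_edge_sym[OF Suc.prems(2)] Suc.prems(1) unfolding near_def
      by blast
    ultimately have "z \<notin> fst ` A \<union> snd ` A" "y \<notin> fst ` A \<union> snd ` A" using far by blast+
    then have "(z, y) \<notin> A" "(y, z) \<notin> A" by force+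
    then have "remove_edges E A z y" using z(2) unfolding remove_edges_def by simp
    moreover have "(remove_edges E A)\<^sup>*\<^sup>* x z" using Suc.IH z(1) Suc.prems(1) by simp
    ultimately show ?case by (simp add: rtranclp.rtrancl_into_rtrancl)
  qed simp
qed

lemma enumeration_tails:
  fixes f :: "int \<Rightarrow> 'a"
  assumes "inj f" and step: "\<And>z. near K (f z) (f (z + 1))" and "finite A"
  shows "\<exists>N. \<forall>z. N \<le> \<bar>z\<bar> \<longrightarrow> f z \<in> cut_component A (f N) \<union> cut_component A (f (- N))"
proof -
  define Er where "Er = remove_edges E A"
  define Bad where "Bad = (\<Union>a\<in>fst ` A \<union> snd ` A. {x. near K a x})"
  have "finite Bad" unfolding Bad_def using \<open>finite A\<close> by (simp add: finite_near)
  then have "finite (f -` Bad)" using \<open>inj f\<close> by (rule finite_vimageI)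
  then obtain N where "0 < N" and bounded: "\<And>z. z \<in> f -` Bad \<Longrightarrow> \<bar>z\<bar> < N"
    by (rule finite_int_set_bounded) blast
  have Er_step: "Er\<^sup>*\<^sup>* (f z) (f (z + 1))" if "N \<le> \<bar>z\<bar>" for z
  proof -
    have "\<forall>a\<in>fst ` A \<union> snd ` A. \<not> near K a (f z)" using bounded[of z] that unfolding Bad_def by force
    then show ?thesis unfolding Er_def by (rule remove_edges_near[OF step])
  qed
  have right: "Er\<^sup>*\<^sup>* (f N) (f z)" if "N \<le> z" for z
    by (rule rtranclp_int_chain[OF _ that]) (use Er_step \<open>0 < N\<close> in auto)
  have left: "Er\<^sup>*\<^sup>* (f (- N)) (f z)" if "z \<le> - N" for z
  proof -
    have left_step: "Er\<^sup>*\<^sup>* (f (- w)) (f (- (w + 1)))" if "N \<le> w" for w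
    proof -
      have "Er\<^sup>*\<^sup>* (f (- w - 1)) (f (- w))" using Er_step[of "- w - 1"] that by simp
      then have "Er\<^sup>*\<^sup>* (f (- w)) (f (- w - 1))" unfolding Er_def by (rule remove_edges_rtranclp_sym)
      moreover have "- (w + 1) = - w - 1" by simp
      ultimately show ?thesis by simp
    qed
    have "Er\<^sup>*\<^sup>* (f (- N)) (f (- (- z)))"
      by (rule rtranclp_int_chain[where f = "\<lambda>w. f (- w)"]) (use left_step that in auto)
    then show ?thesis by simp
  qed
  have "f z \<in> cut_component A (f N) \<union> cut_component A (f (- N))" if "N \<le> \<bar>z\<bar>" for z
  proof -
    from that consider "N \<le> z" | "z \<le> - N" by linarith
    then show ?thesis using right left unfolding cut_component_def Er_def by cases blast+
  qed
  then show ?thesis by blast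
qed

lemma num_ends_le_2_of_enumeration:
  fixes f :: "int \<Rightarrow> 'a"
  assumes bij: "bij_betw f UNIV V" and step: "\<And>z. near K (f z) (f (z + 1))"
  shows "num_ends V E \<le> enat 2"
  unfolding num_ends_def components_remove_edges
proof (rule SUP_least, clarify)
  fix A :: "('a \<times> 'a) set" assume "finite A"
  have "inj f" and range_f: "range f = V" using bij unfolding bij_betw_def by auto
  obtain N where tails: "\<And>z. N \<le> \<bar>z\<bar> \<Longrightarrow> f z \<in> cut_component A (f N) \<union> cut_component A (f (- N))"
    using enumeration_tails[of f K A] \<open>inj f\<close> step \<open>finite A\<close> by blast
  have sub: "{C \<in> cut_component A ` V. infinite C} \<subseteq> {cut_component A (f N), cut_component A (f (- N))}"
  proof
    fix C assume "C \<in> {C \<in> cut_component A ` V. infinite C}"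
    then obtain x where "x \<in> V" "C = cut_component A x" "infinite (cut_component A x)" by blast
    moreover have "finite (f ` {z. - N < z \<and> z < N})" by simp
    ultimately obtain w where w: "w \<in> cut_component A x" "w \<notin> f ` {z. - N < z \<and> z < N}"
      by (meson finite_subset subsetI)
    have "w \<in> V" using w(1) cut_component_subset[OF \<open>x \<in> V\<close>] by blast
    then obtain z where "w = f z" using range_f by blast
    with w(2) have "N \<le> \<bar>z\<bar>" by force
    then have "w \<in> cut_component A (f N) \<or> w \<in> cut_component A (f (- N))"
      using tails \<open>w = f z\<close> by blast
    then have "cut_component A x = cut_component A (f N) \<or> cut_component A x = cut_component A (f (- N))"
      using cut_component_eq[OF w(1)] cut_component_eq[of w A "f N"] cut_component_eq[of w A "f (- N)"]
      by metis
    then show "C \<in> {cut_component A (f N), cut_component A (f (- N))}" using \<open>C = cut_component A x\<close> by blast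
  qed
  have "finite {C \<in> cut_component A ` V. infinite C}" by (rule finite_subset[OF sub]) simp
  moreover have "card {C \<in> cut_component A ` V. infinite C} \<le> 2"
  proof -
    have "card {C \<in> cut_component A ` V. infinite C} \<le> card {cut_component A (f N), cut_component A (f (- N))}"
      by (rule card_mono[OF _ sub]) simp
    also have "\<dots> \<le> 2" by (simp add: card_insert_if)
    finally show ?thesis .
  qed
  ultimately show "ecard {C \<in> cut_component A ` V. infinite C} \<le> enat 2" unfolding ecard_def by simp
qed

lemma enumeration_of_num_ends_le_2:
  assumes "graph_connected V E" "infinite V" and ends: "num_ends V E \<le> enat 2"
  shows "\<exists>f::int \<Rightarrow> 'a. \<exists>K. bij_betw f UNIV V \<and> (\<forall>z. near K (f z) (f (z + 1)))"
proof (cases "num_ends V E \<le> enat 1")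
  case True
  interpret one_ended_subgraph V E V
    using connected_set_V[OF assms(1)] assms(2) one_ended_V[OF True] by unfold_locales
  obtain s where "s \<in> V" using assms(2) by (metis ex_in_conv finite.emptyI)
  then obtain g where "bij_betw g UNIV V" "\<And>n. near 3 (g n) (g (Suc n))"
    using ray_enumeration by blast
  then show ?thesis using int_enumeration_of_nat_enumeration by blast
next
  case False
  obtain W1 W2 s1 s2 where part: "W1 \<union> W2 = V" "W1 \<inter> W2 = {}"
    and W1: "connected_set W1" "infinite W1" "one_ended W1"
    and W2: "connected_set W2" "infinite W2" "one_ended W2"
    and s: "s1 \<in> W1" "s2 \<in> W2" "E s1 s2"
    using split_two_ended[OF assms(1) ends False] by blast
  interpret W1: one_ended_subgraph V E W1 using W1 by unfold_locales
  interpret W2: one_ended_subgraph V E W2 using W2 by unfold_locales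
  obtain g1 where g1: "bij_betw g1 UNIV W1" "g1 0 = s1" "\<And>n. near 3 (g1 n) (g1 (Suc n))"
    using W1.ray_enumeration[OF s(1)] by blast
  obtain g2 where g2: "bij_betw g2 UNIV W2" "g2 0 = s2" "\<And>n. near 3 (g2 n) (g2 (Suc n))"
    using W2.ray_enumeration[OF s(2)] by blast
  have "near 3 (g2 0) (g1 0)" using g1(2) g2(2) near_mono[OF near_edge[OF edge_sym[OF s(3)]]] by simp
  from glue_enumerations[OF g1(1) g2(1) part g1(3) g2(3) this] show ?thesis by blast
qed

end

theorem corollary3p4:
  fixes V :: "'a set" and E :: "'a \<Rightarrow> 'a \<Rightarrow> bool"
  assumes "simple_graph V E" and "graph_connected V E" and "infinite V"
    and "bounded_degree V E"
  shows "(\<exists>act. translation_like V E act \<and> transitive_action V act) \<longleftrightarrow> num_ends V E \<le> 2"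
proof -
  interpret bounded_degree_graph V E using assms(1,4) by unfold_locales
  have "V \<noteq> {}" using assms(3) by auto
  have "(\<exists>act. translation_like V E act \<and> transitive_action V act) \<longleftrightarrow>
      (\<exists>f::int \<Rightarrow> 'a. \<exists>K. bij_betw f UNIV V \<and> (\<forall>z. near K (f z) (f (z + 1))))"
    using translation_like_of_enumeration enumeration_of_translation_like[OF assms(2) \<open>V \<noteq> {}\<close>] by blast
  also have "\<dots> \<longleftrightarrow> num_ends V E \<le> 2"
    using num_ends_le_2_of_enumeration enumeration_of_num_ends_le_2[OF assms(2,3)]
    by (auto simp: numeral_eq_enat)
  finally show ?thesis .
qed

end
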